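(* Let $a\in\mathbb{R}$, $T>0$ and let $\mathcal{G}_{\mathrm{adv}}$ and $\mu$ be as in the context. Let $M>0$. There exists a constant $C>0$, depending only on $M$ and $\mu$ (in particular independent of $m$ and $p$), such that for any $m,p\in\mathbb{N}$, any choice of sensor points $x_1,\dots,x_m\in\mathbb{T}$, any measurable branch map $\boldsymbol\beta:\mathbb{R}^m\to\mathbb{R}^p$ and any trunk functions $\tau_1,\dots,\tau_p\in L^2(\mathbb{T})$, the DeepONet $\mathcal{N}^{\mathrm{DON}}(\bar u)(y)=\sum_{k=1}^p\beta_k(\bar u(x_1),\dots,\bar u(x_m))\tau_k(y)$ satisfying $\sup_{\bar u\in\operatorname{supp}\mu}\|\mathcal{N}^{\mathrm{DON}}(\bar u)\|_{L^\infty}\le M$ obeys \[ \mathbb{E}_{\bar u\sim\mu}\big[\|\mathcal{G}_{\mathrm{adv}}(\bar u)-\mathcal{N}^{\mathrm{DON}}(\bar u)\|_{L^1(\mathbb{T})}\big]\ \ge\ \frac{C}{\min(m,p)}. \]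
   Context: $\mathbb{T}=\mathbb{R}/2\pi\mathbb{Z}$ (identified with $[0,2\pi)$), with Lebesgue measure. Fix constants $0<\underline h\le\overline h$ and $0<\underline w\le\overline w<2\pi$. The input measure $\mu$ is the law of the random function $\bar u(x)=h\,1_{[-w/2,w/2]}(x-\xi)$ (understood $2\pi$-periodically on $\mathbb{T}$), where $h\sim\mathrm{Unif}[\underline h,\overline h]$, $w\sim\mathrm{Unif}[\underline w,\overline w]$, $\xi\sim\mathrm{Unif}[0,2\pi]$ are independent. For fixed speed $a\in\mathbb{R}$ and time $T>0$, $\mathcal{G}_{\mathrm{adv}}$ is the solution operator at time $T$ of the linear advection equation $\partial_tu+a\partial_xu=0$ on $\mathbb{T}$, i.e. $\mathcal{G}_{\mathrm{adv}}(\bar u)(x)=\bar u(x-aT)$. *)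

theory Defs
  imports "HOL-Probability.Probability"
begin

text \<open>The torus T = R/2piZ is represented by 2pi-periodic real functions;
  integrals over T are integrals over the fundamental domain [0,2pi).\<close>

definition box_fun :: "real \<Rightarrow> real \<Rightarrow> real \<Rightarrow> real \<Rightarrow> real" where
  "box_fun h w \<xi> x = (if \<exists>k::int. \<bar>x - \<xi> - 2 * pi * real_of_int k\<bar> \<le> w / 2 then h else 0)"

definition G_adv :: "real \<Rightarrow> real \<Rightarrow> (real \<Rightarrow> real) \<Rightarrow> (real \<Rightarrow> real)" where
  "G_adv a T u = (\<lambda>x. u (x - a * T))"

definition unif_real :: "real \<Rightarrow> real \<Rightarrow> real measure" where
  "unif_real lo hi = (if lo < hi then uniform_measure lborel {lo..hi} else return lborel lo)"

text \<open>Law of the parameters (h, (w, xi)); mu is its push-forward under box_fun.\<close>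
definition param_law :: "real \<Rightarrow> real \<Rightarrow> real \<Rightarrow> real \<Rightarrow> (real \<times> real \<times> real) measure" where
  "param_law hl hu wl wu = unif_real hl hu \<Otimes>\<^sub>M (unif_real wl wu \<Otimes>\<^sub>M unif_real 0 (2 * pi))"

text \<open>DeepONet with sensors x_0..x_{m-1}, branch components beta_k (functions on R^m,
  represented as extensional functions on {..<m}) and trunk functions tau_k, k < p.\<close>
definition deeponet :: "nat \<Rightarrow> nat \<Rightarrow> (nat \<Rightarrow> real) \<Rightarrow> (nat \<Rightarrow> (nat \<Rightarrow> real) \<Rightarrow> real)
     \<Rightarrow> (nat \<Rightarrow> real \<Rightarrow> real) \<Rightarrow> (real \<Rightarrow> real) \<Rightarrow> real \<Rightarrow> real" where
  "deeponet m p x \<beta> \<tau> u y = (\<Sum>k<p. \<beta> k (\<lambda>i\<in>{..<m}. u (x i)) * \<tau> k y)"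

definition L1_dist_T :: "(real \<Rightarrow> real) \<Rightarrow> (real \<Rightarrow> real) \<Rightarrow> ennreal" where
  "L1_dist_T f g = (\<integral>\<^sup>+ y. ennreal (indicator {0..<2 * pi} y * \<bar>f y - g y\<bar>) \<partial>lborel)"

end

theory Submission
  imports Defs
begin

text \<open>Fix the height h and the width w, and move the input box through 2q + 1 positions,
  q = min m p, spaced by \<delta> = L/(2q), so that the left edges of the (advected) target boxes
  sweep a zone of length L cut into 2q slabs. Consecutive targets differ by a bump of height h on
  a single slab, so the 2q target increments are pairwise L^1-separated: any nontrivial
  combination of them has L^1 norm at least h \<delta> times the sum of the moduli of its coefficients.
  The corresponding increments of the DeepONet output lie in the p-dimensional span of the trunk
  functions, and an increment vanishes unless some sensor crosses an edge of the input box, which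
  happens at most once per sensor along the sweep. Hence at most min m p = q of the 2q target
  increments are reproduced with error below h \<delta>, and by the triangle inequality the errors at the
  2q + 1 positions add up to at least q h \<delta> / 2 = h L / 4. Averaging over the starting point of
  the sweep gives an expected error of at least h L^2 / (16 \<pi> q) for fixed h and w.\<close>

definition in_periodic_window :: "real \<Rightarrow> real \<Rightarrow> real \<Rightarrow> bool" where
  "in_periodic_window w c z \<longleftrightarrow> (\<exists>k::int. \<bar>z - c - 2 * pi * real_of_int k\<bar> \<le> w / 2)"

lemma box_fun_eq_window: "box_fun h w c z = (if in_periodic_window w c z then h else 0)"
  unfolding box_fun_def in_periodic_window_def ..

lemma in_periodic_window_iff_abs:
  assumes "\<bar>z - c\<bar> < 2 * pi - w / 2"
  shows "in_periodic_window w c z \<longleftrightarrow> \<bar>z - c\<bar> \<le> w / 2"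
proof
  assume "in_periodic_window w c z"
  then obtain k :: int where k: "\<bar>z - c - 2 * pi * k\<bar> \<le> w / 2"
    unfolding in_periodic_window_def by blast
  have "k = 0"
  proof (rule ccontr)
    assume "k \<noteq> 0"
    then have "2 * pi \<le> \<bar>2 * pi * k\<bar>"
      by (simp add: abs_mult)
    then show False using k assms by linarith
  qed
  then show "\<bar>z - c\<bar> \<le> w / 2" using k by simp
qed (auto simp: in_periodic_window_def intro: exI[of _ 0])

lemma in_periodic_window_shift_period:
  "in_periodic_window w (c + 2 * pi * real_of_int k) z \<longleftrightarrow> in_periodic_window w c z"
  unfolding in_periodic_window_def
proof
  assume "\<exists>k'. \<bar>z - (c + 2 * pi * real_of_int k) - 2 * pi * real_of_int k'\<bar> \<le> w / 2"
  then obtain k' :: int where "\<bar>z - (c + 2 * pi * real_of_int k) - 2 * pi * real_of_int k'\<bar> \<le> w / 2" ..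
  then show "\<exists>k'. \<bar>z - c - 2 * pi * real_of_int k'\<bar> \<le> w / 2"
    by (intro exI[of _ "k + k'"]) (simp add: algebra_simps)
next
  assume "\<exists>k'. \<bar>z - c - 2 * pi * real_of_int k'\<bar> \<le> w / 2"
  then obtain k' :: int where "\<bar>z - c - 2 * pi * real_of_int k'\<bar> \<le> w / 2" ..
  then show "\<exists>k'. \<bar>z - (c + 2 * pi * real_of_int k) - 2 * pi * real_of_int k'\<bar> \<le> w / 2"
    by (intro exI[of _ "k' - k"]) (simp add: algebra_simps)
qed

lemma in_periodic_window_between:
  assumes "t1 \<le> t2" "t2 \<le> t3" "t3 - t1 < 2 * pi - w"
    and "in_periodic_window w t1 z" "in_periodic_window w t3 z"
  shows "in_periodic_window w t2 z"
proof -
  obtain k1 :: int where k1: "\<bar>z - t1 - 2 * pi * k1\<bar> \<le> w / 2"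
    using assms(4) unfolding in_periodic_window_def by blast
  obtain k3 :: int where k3: "\<bar>z - t3 - 2 * pi * k3\<bar> \<le> w / 2"
    using assms(5) unfolding in_periodic_window_def by blast
  \<comment> \<open>the two windows are less than one period apart, so they see the same copy of z\<close>
  have "k1 = k3"
  proof (rule ccontr)
    assume "k1 \<noteq> k3"
    then have "2 * pi \<le> \<bar>2 * pi * k3 - 2 * pi * k1\<bar>"
      by (simp add: abs_mult flip: right_diff_distrib of_int_diff)
    then show False using k1 k3 assms(1-3) by linarith
  qed
  then have "\<bar>z - t2 - 2 * pi * k1\<bar> \<le> w / 2"
    using k1 k3 assms(1,2) unfolding \<open>k1 = k3\<close> abs_le_iff by linarith
  then show ?thesis unfolding in_periodic_window_def by blast
qed

lemma not_in_periodic_window_between: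
  assumes "t1 \<le> t2" "t2 \<le> t3" "t3 - t1 < w"
    and "\<not> in_periodic_window w t1 z" "\<not> in_periodic_window w t3 z"
  shows "\<not> in_periodic_window w t2 z"
proof
  assume "in_periodic_window w t2 z"
  then obtain k :: int where "\<bar>z - t2 - 2 * pi * k\<bar> \<le> w / 2"
    unfolding in_periodic_window_def by blast
  moreover have "w / 2 < \<bar>z - t1 - 2 * pi * k\<bar>" "w / 2 < \<bar>z - t3 - 2 * pi * k\<bar>"
    using assms(4,5) unfolding in_periodic_window_def by (meson not_le)+
  ultimately show False using assms(1-3) by linarith
qed

lemma box_fun_translate: "box_fun h w \<xi> (y - c) = box_fun h w (\<xi> + c) y"
  unfolding box_fun_def by (simp add: algebra_simps)

lemma box_fun_add_period: "box_fun h w (\<xi> + 2 * pi * real_of_int k) = box_fun h w \<xi>"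
  by (simp add: fun_eq_iff box_fun_eq_window in_periodic_window_shift_period)

lemma G_adv_box_fun: "G_adv a T (box_fun h w \<xi>) = box_fun h w (\<xi> + a * T)"
  unfolding G_adv_def by (simp add: box_fun_translate)

lemma box_fun_on_slab:
  assumes "0 \<le> \<delta>" "real n * \<delta> \<le> w" "w + real n * \<delta> < 2 * pi" "i \<le> n" "j < n"
    and "real j * \<delta> \<le> y - (c - w / 2)" "y - (c - w / 2) < real (Suc j) * \<delta>"
  shows "box_fun h w (c + real i * \<delta>) y = (if i \<le> j then h else 0)"
proof -
  have mono: "real a * \<delta> \<le> real b * \<delta>" if "a \<le> b" for a b
    using that assms(1) by (simp add: mult_right_mono)
  have "real i * \<delta> \<le> real n * \<delta>" "real (Suc j) * \<delta> \<le> real n * \<delta>"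
    "0 \<le> real i * \<delta>" "0 \<le> real j * \<delta>"
    using mono[OF assms(4)] mono[of "Suc j" n] assms(1,5) by auto
  then have "\<bar>y - (c + real i * \<delta>)\<bar> < 2 * pi - w / 2"
    using assms(2,3,6,7) by (simp add: abs_less_iff)
  then have window: "box_fun h w (c + real i * \<delta>) y = (if \<bar>y - (c + real i * \<delta>)\<bar> \<le> w / 2 then h else 0)"
    by (simp add: box_fun_eq_window in_periodic_window_iff_abs)
  show ?thesis
  proof (cases "i \<le> j")
    case True
    have "\<bar>y - (c + real i * \<delta>)\<bar> \<le> w / 2"
      using mono[OF True] assms(2,6,7) \<open>real (Suc j) * \<delta> \<le> real n * \<delta>\<close> \<open>0 \<le> real i * \<delta>\<close>
      unfolding abs_le_iff by linarith
    then show ?thesis using window True by simp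
  next
    case False
    have "\<not> \<bar>y - (c + real i * \<delta>)\<bar> \<le> w / 2"
      using mono[of "Suc j" i] False assms(7) unfolding abs_le_iff by linarith
    then show ?thesis using window False by simp
  qed
qed

lemma disjoint_family_slabs:
  fixes a \<delta> :: real
  assumes "0 \<le> \<delta>"
  shows "disjoint_family (\<lambda>j. {a + real j * \<delta> ..< a + real (Suc j) * \<delta>})"
  unfolding disjoint_family_on_def
proof (intro ballI impI)
  fix i j :: nat assume "i \<noteq> j"
  then have "Suc i \<le> j \<or> Suc j \<le> i" by auto
  then have "real (Suc i) * \<delta> \<le> real j * \<delta> \<or> real (Suc j) * \<delta> \<le> real i * \<delta>"
    using assms by (auto intro: mult_right_mono)
  then show "{a + real i * \<delta> ..< a + real (Suc i) * \<delta>} \<inter> {a + real j * \<delta> ..< a + real (Suc j) * \<delta>} = {}"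
    by auto
qed

lemma box_fun_slabs:
  assumes "0 < \<delta>" "real n * \<delta> \<le> w" "w + real n * \<delta> < 2 * pi"
    and "0 \<le> c - w / 2" "c - w / 2 + real n * \<delta> \<le> 2 * pi"
  defines "D \<equiv> \<lambda>j. {c - w / 2 + real j * \<delta> ..< c - w / 2 + real (Suc j) * \<delta>}"
  shows "disjoint_family D"
    and "\<And>j. j < n \<Longrightarrow> D j \<in> sets lborel \<and> D j \<subseteq> {0..<2 * pi} \<and> emeasure lborel (D j) = ennreal \<delta>"
    and "\<And>i j y. i < n \<Longrightarrow> j < n \<Longrightarrow> y \<in> D i \<Longrightarrow>
           \<bar>box_fun h w (c + real (Suc j) * \<delta>) y - box_fun h w (c + real j * \<delta>) y\<bar> = (if i = j then \<bar>h\<bar> else 0)"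
proof -
  show "disjoint_family D"
    unfolding D_def using assms(1) by (intro disjoint_family_slabs) simp
  show "D j \<in> sets lborel \<and> D j \<subseteq> {0..<2 * pi} \<and> emeasure lborel (D j) = ennreal \<delta>" if "j < n" for j
  proof -
    define lo where "lo = c - w / 2 + real j * \<delta>"
    have "D j = {lo ..< lo + \<delta>}" by (simp add: D_def lo_def algebra_simps)
    moreover have "real (Suc j) * \<delta> \<le> real n * \<delta>" "0 \<le> real j * \<delta>"
      using that assms(1) by (simp_all add: mult_right_mono)
    then have "0 \<le> lo" "lo + \<delta> \<le> 2 * pi"
      using assms(4,5) unfolding lo_def by (simp_all add: algebra_simps)
    ultimately show ?thesis using assms(1) by auto
  qed
  show "\<bar>box_fun h w (c + real (Suc j) * \<delta>) y - box_fun h w (c + real j * \<delta>) y\<bar> = (if i = j then \<bar>h\<bar> else 0)"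
    if "i < n" "j < n" "y \<in> D i" for i j y
    using box_fun_on_slab[of \<delta> n w "Suc j" i y c h] box_fun_on_slab[of \<delta> n w j i y c h] that assms(1-3)
    by (auto simp: D_def algebra_simps)
qed

lemma card_switches_le_one:
  fixes P :: "nat \<Rightarrow> bool"
  assumes convex: "\<And>i j k. i \<le> j \<Longrightarrow> j \<le> k \<Longrightarrow> k \<le> n \<Longrightarrow> P i \<Longrightarrow> P k \<Longrightarrow> P j"
    and coconvex: "\<And>i j k. i \<le> j \<Longrightarrow> j \<le> k \<Longrightarrow> k \<le> n \<Longrightarrow> \<not> P i \<Longrightarrow> \<not> P k \<Longrightarrow> \<not> P j"
  shows "card {j. j < n \<and> P j \<noteq> P (Suc j)} \<le> 1"
proof -
  have no_two_switches: False
    if "j' < n" "P j \<noteq> P (Suc j)" "P j' \<noteq> P (Suc j')" "j < j'" for j j'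
  proof -
    have "j \<le> Suc j" "Suc j \<le> j'" "j' \<le> Suc j'" "j' \<le> n" "Suc j' \<le> n"
      using that by simp_all
    then show False
      using that(2,3) convex[of j "Suc j" j'] convex[of j "Suc j" "Suc j'"]
        coconvex[of j "Suc j" j'] coconvex[of j "Suc j" "Suc j'"] by (meson le_trans)
  qed
  define S where "S = {j. j < n \<and> P j \<noteq> P (Suc j)}"
  have same: "j = j'" if "j \<in> S" "j' \<in> S" for j j'
    using that no_two_switches[of j' j] no_two_switches[of j j'] unfolding S_def
    by (cases j j' rule: linorder_cases) auto
  have "finite S" unfolding S_def by simp
  then have "card S \<le> Suc 0"
    unfolding card_le_Suc0_iff_eq[OF \<open>finite S\<close>] using same by blast
  then show ?thesis unfolding S_def by simp
qed

lemma card_window_switches_le_one: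
  assumes "0 \<le> \<delta>" "real n * \<delta> < w" "real n * \<delta> < 2 * pi - w"
  shows "card {j. j < n \<and> in_periodic_window w (t + real j * \<delta>) z
                   \<noteq> in_periodic_window w (t + real (Suc j) * \<delta>) z} \<le> 1"
proof (rule card_switches_le_one)
  have mono: "t + real i * \<delta> \<le> t + real j * \<delta>" if "i \<le> j" for i j
    using that assms(1) by (simp add: mult_right_mono)
  have span: "(t + real k * \<delta>) - (t + real i * \<delta>) \<le> real n * \<delta>" if "k \<le> n" for i k
    using that assms(1) by (simp add: mult_right_mono flip: left_diff_distrib)
  show "in_periodic_window w (t + real j * \<delta>) z"
    if "i \<le> j" "j \<le> k" "k \<le> n" "in_periodic_window w (t + real i * \<delta>) z"
      "in_periodic_window w (t + real k * \<delta>) z" for i j k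
    by (rule in_periodic_window_between[OF mono[OF that(1)] mono[OF that(2)] _ that(4,5)])
      (use span[OF that(3), of i] assms(3) in linarith)
  show "\<not> in_periodic_window w (t + real j * \<delta>) z"
    if "i \<le> j" "j \<le> k" "k \<le> n" "\<not> in_periodic_window w (t + real i * \<delta>) z"
      "\<not> in_periodic_window w (t + real k * \<delta>) z" for i j k
    by (rule not_in_periodic_window_between[OF mono[OF that(1)] mono[OF that(2)] _ that(4,5)])
      (use span[OF that(3), of i] assms(2) in linarith)
qed

lemma card_sensor_changes_le:
  assumes "\<And>i. i < m \<Longrightarrow> card {j. j < n \<and> u j (x i) \<noteq> u (Suc j) (x i)} \<le> 1"
  shows "card {j. j < n \<and> (\<lambda>i\<in>{..<m}. u j (x i)) \<noteq> (\<lambda>i\<in>{..<m}. u (Suc j) (x i))} \<le> m"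
proof -
  have "card {j. j < n \<and> (\<lambda>i\<in>{..<m}. u j (x i)) \<noteq> (\<lambda>i\<in>{..<m}. u (Suc j) (x i))}
      \<le> card (\<Union>i<m. {j. j < n \<and> u j (x i) \<noteq> u (Suc j) (x i)})"
    by (intro card_mono) (auto simp: fun_eq_iff split: if_splits)
  also have "\<dots> \<le> (\<Sum>i<m. card {j. j < n \<and> u j (x i) \<noteq> u (Suc j) (x i)})"
    by (rule card_UN_le) simp
  also have "\<dots> \<le> (\<Sum>i<m. 1)" using assms by (intro sum_mono) auto
  finally show ?thesis by simp
qed

lemma card_box_sensor_changes_le:
  assumes "h \<noteq> 0" "0 \<le> \<delta>" "real n * \<delta> < w" "real n * \<delta> < 2 * pi - w"
  shows "card {j. j < n \<and> (\<lambda>i\<in>{..<m}. box_fun h w (t + real j * \<delta>) (x i))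
                   \<noteq> (\<lambda>i\<in>{..<m}. box_fun h w (t + real (Suc j) * \<delta>) (x i))} \<le> m"
proof (rule card_sensor_changes_le[where u = "\<lambda>j. box_fun h w (t + real j * \<delta>)"])
  fix i
  have "{j. j < n \<and> box_fun h w (t + real j * \<delta>) (x i) \<noteq> box_fun h w (t + real (Suc j) * \<delta>) (x i)}
      = {j. j < n \<and> in_periodic_window w (t + real j * \<delta>) (x i)
                   \<noteq> in_periodic_window w (t + real (Suc j) * \<delta>) (x i)}"
    using assms(1) by (intro Collect_cong) (simp add: box_fun_eq_window)
  then show "card {j. j < n \<and> box_fun h w (t + real j * \<delta>) (x i)
                         \<noteq> box_fun h w (t + real (Suc j) * \<delta>) (x i)} \<le> 1"
    using card_window_switches_le_one[OF assms(2-4)] by (simp only:)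
qed

definition L1_norm_on :: "'a measure \<Rightarrow> 'a set \<Rightarrow> ('a \<Rightarrow> real) \<Rightarrow> ennreal" where
  "L1_norm_on M \<Omega> f = (\<integral>\<^sup>+ y. ennreal (indicator \<Omega> y * \<bar>f y\<bar>) \<partial>M)"

lemma L1_dist_T_eq_L1_norm_on:
  "L1_dist_T f g = L1_norm_on lborel {0..<2 * pi} (\<lambda>y. f y - g y)"
  unfolding L1_dist_T_def L1_norm_on_def ..

lemma L1_norm_on_sum_le:
  assumes "\<Omega> \<in> sets M" "\<And>j. j \<in> S \<Longrightarrow> g j \<in> borel_measurable M"
  shows "L1_norm_on M \<Omega> (\<lambda>y. \<Sum>j\<in>S. c j * g j y) \<le> (\<Sum>j\<in>S. ennreal \<bar>c j\<bar> * L1_norm_on M \<Omega> (g j))"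
proof -
  have "L1_norm_on M \<Omega> (\<lambda>y. \<Sum>j\<in>S. c j * g j y)
      \<le> (\<integral>\<^sup>+ y. (\<Sum>j\<in>S. ennreal \<bar>c j\<bar> * ennreal (indicator \<Omega> y * \<bar>g j y\<bar>)) \<partial>M)"
    unfolding L1_norm_on_def
  proof (rule nn_integral_mono)
    fix y
    have "indicator \<Omega> y * \<bar>\<Sum>j\<in>S. c j * g j y\<bar> \<le> (\<Sum>j\<in>S. \<bar>c j\<bar> * (indicator \<Omega> y * \<bar>g j y\<bar>))"
      by (auto simp: indicator_def abs_mult intro: order.trans[OF sum_abs])
    then have "ennreal (indicator \<Omega> y * \<bar>\<Sum>j\<in>S. c j * g j y\<bar>)
        \<le> ennreal (\<Sum>j\<in>S. \<bar>c j\<bar> * (indicator \<Omega> y * \<bar>g j y\<bar>))"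
      by (rule ennreal_leI)
    also have "\<dots> = (\<Sum>j\<in>S. ennreal \<bar>c j\<bar> * ennreal (indicator \<Omega> y * \<bar>g j y\<bar>))"
      by (subst sum_ennreal[symmetric]) (auto simp: ennreal_mult)
    finally show "ennreal (indicator \<Omega> y * \<bar>\<Sum>j\<in>S. c j * g j y\<bar>)
        \<le> (\<Sum>j\<in>S. ennreal \<bar>c j\<bar> * ennreal (indicator \<Omega> y * \<bar>g j y\<bar>))" .
  qed
  also have "\<dots> = (\<Sum>j\<in>S. ennreal \<bar>c j\<bar> * L1_norm_on M \<Omega> (g j))"
    using assms unfolding L1_norm_on_def by (subst nn_integral_sum) (auto simp: nn_integral_cmult)
  finally show ?thesis .
qed

lemma L1_norm_on_diff_le:
  assumes "\<Omega> \<in> sets M" "f \<in> borel_measurable M" "g \<in> borel_measurable M"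
  shows "L1_norm_on M \<Omega> (\<lambda>y. f y - g y) \<le> L1_norm_on M \<Omega> f + L1_norm_on M \<Omega> g"
  using L1_norm_on_sum_le[of \<Omega> M "{True, False}" "\<lambda>b. if b then f else g" "\<lambda>b. if b then 1 else -1"]
    assms by simp

lemma L1_norm_on_combination_of_bumps_ge:
  assumes "finite B" "disjoint_family_on D B" "0 \<le> h" "0 \<le> \<delta>"
    and "\<And>j. j \<in> B \<Longrightarrow> D j \<in> sets M \<and> D j \<subseteq> \<Omega> \<and> emeasure M (D j) = ennreal \<delta>"
    and "\<And>i j y. i \<in> B \<Longrightarrow> j \<in> B \<Longrightarrow> y \<in> D i \<Longrightarrow> \<bar>f j y\<bar> = (if i = j then h else 0)"
  shows "ennreal (h * \<delta> * (\<Sum>j\<in>B. \<bar>c j\<bar>)) \<le> L1_norm_on M \<Omega> (\<lambda>y. \<Sum>j\<in>B. c j * f j y)"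
proof -
  have "ennreal (h * \<delta> * (\<Sum>j\<in>B. \<bar>c j\<bar>)) = (\<Sum>j\<in>B. ennreal (h * \<bar>c j\<bar>) * emeasure M (D j))"
    using assms(3,4,5) by (simp add: sum_distrib_left ennreal_mult' mult_ac flip: sum_ennreal)
  also have "\<dots> = (\<integral>\<^sup>+ y. (\<Sum>j\<in>B. ennreal (h * \<bar>c j\<bar>) * indicator (D j) y) \<partial>M)"
  proof (subst nn_integral_sum)
    fix j assume "j \<in> B"
    then have [measurable]: "D j \<in> sets M" using assms(5) by blast
    show "(\<lambda>y. ennreal (h * \<bar>c j\<bar>) * indicator (D j) y) \<in> borel_measurable M" by measurable
  qed (use assms(5) in \<open>simp_all add: nn_integral_cmult_indicator\<close>)
  also have "\<dots> \<le> L1_norm_on M \<Omega> (\<lambda>y. \<Sum>j\<in>B. c j * f j y)"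
    unfolding L1_norm_on_def
  proof (rule nn_integral_mono)
    fix y
    show "(\<Sum>j\<in>B. ennreal (h * \<bar>c j\<bar>) * indicator (D j) y)
        \<le> ennreal (indicator \<Omega> y * \<bar>\<Sum>j\<in>B. c j * f j y\<bar>)"
    proof (cases "\<exists>i\<in>B. y \<in> D i")
      case True
      then obtain i where i: "i \<in> B" "y \<in> D i" by blast
      have lhs: "(\<Sum>j\<in>B. ennreal (h * \<bar>c j\<bar>) * indicator (D j) y) = ennreal (h * \<bar>c i\<bar>)"
        using sum_indicator_disjoint_family[OF assms(2) i(2) assms(1) i(1)] .
      have "f j y = 0" if "j \<in> B - {i}" for j
        using assms(6)[OF i(1) _ i(2), of j] that by auto
      then have rhs: "(\<Sum>j\<in>B. c j * f j y) = c i * f i y"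
        using assms(1) i by (subst sum.remove[of _ i]) (auto intro!: sum.neutral)
      have "y \<in> \<Omega>" "\<bar>f i y\<bar> = h"
        using i assms(5)[OF i(1)] assms(6)[OF i(1) i(1) i(2)] by auto
      then show ?thesis unfolding lhs rhs by (simp add: abs_mult mult.commute)
    qed (simp add: indicator_def)
  qed
  finally show ?thesis .
qed

lemma exists_nontrivial_vanishing_combination:
  fixes v :: "'a \<Rightarrow> nat \<Rightarrow> real"
  assumes "finite S" "p < card S"
  shows "\<exists>c. (\<exists>j\<in>S. c j \<noteq> 0) \<and> (\<forall>k<p. (\<Sum>j\<in>S. c j * v j k) = 0)"
  using assms
proof (induction p arbitrary: S v)
  case 0
  then obtain j where "j \<in> S" by fastforce
  then show ?case by (intro exI[of _ "\<lambda>_. 1"]) auto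
next
  case (Suc p)
  show ?case
  proof (cases "\<forall>j\<in>S. v j p = 0")
    case True
    obtain c where c: "\<exists>j\<in>S. c j \<noteq> 0" "\<forall>k<p. (\<Sum>j\<in>S. c j * v j k) = 0"
      using Suc.IH[of S v] Suc.prems by auto
    have "(\<Sum>j\<in>S. c j * v j k) = 0" if "k < Suc p" for k
      using c True that by (cases "k = p") auto
    then show ?thesis using c by blast
  next
    case False
    then obtain j0 where j0: "j0 \<in> S" "v j0 p \<noteq> 0" by blast
    \<comment> \<open>Gaussian elimination: clear the p-th coordinate using the vector j0\<close>
    define S' where "S' = S - {j0}"
    define v' where "v' j k = v j k - (v j p / v j0 p) * v j0 k" for j k
    have "finite S'" "p < card S'" using Suc.prems j0 unfolding S'_def by auto
    then obtain c' where c': "\<exists>j\<in>S'. c' j \<noteq> 0" "\<forall>k<p. (\<Sum>j\<in>S'. c' j * v' j k) = 0"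
      using Suc.IH by blast
    define c where "c j = (if j = j0 then - (\<Sum>i\<in>S'. c' i * v i p) / v j0 p else c' j)" for j
    have split_j0: "(\<Sum>j\<in>S. f j) = f j0 + (\<Sum>j\<in>S'. f j)" for f :: "_ \<Rightarrow> real"
      unfolding S'_def using j0 Suc.prems(1) by (simp add: sum.remove)
    have "(\<Sum>j\<in>S. c j * v j k) = 0" if "k < Suc p" for k
    proof (cases "k = p")
      case True
      have "(\<Sum>j\<in>S'. c j * v j k) = (\<Sum>j\<in>S'. c' j * v j p)"
        using True by (intro sum.cong) (auto simp: c_def S'_def)
      then show ?thesis using j0 True by (simp add: split_j0 c_def)
    next
      case False
      then have "k < p" using that by simp
      have "(\<Sum>j\<in>S'. c j * v j k) = (\<Sum>j\<in>S'. c' j * v' j k + (c' j * v j p / v j0 p) * v j0 k)"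
        by (intro sum.cong) (auto simp: c_def S'_def v'_def algebra_simps)
      also have "\<dots> = (\<Sum>j\<in>S'. c' j * v' j k) + (\<Sum>j\<in>S'. c' j * v j p) / v j0 p * v j0 k"
        by (simp add: sum.distrib sum_distrib_right sum_divide_distrib)
      also have "\<dots> = (\<Sum>j\<in>S'. c' j * v j p) / v j0 p * v j0 k" using c' \<open>k < p\<close> by simp
      finally show ?thesis using j0 by (simp add: split_j0 c_def)
    qed
    moreover have "\<exists>j\<in>S. c j \<noteq> 0" using c' unfolding c_def S'_def by auto
    ultimately show ?thesis by blast
  qed
qed

lemma sum_abs_mult_less_ennreal:
  fixes c :: "'b \<Rightarrow> real" and e :: "'b \<Rightarrow> ennreal"
  assumes "finite B" "\<exists>j\<in>B. c j \<noteq> 0" "\<And>j. j \<in> B \<Longrightarrow> e j < ennreal r"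
  shows "(\<Sum>j\<in>B. ennreal \<bar>c j\<bar> * e j) < ennreal (r * (\<Sum>j\<in>B. \<bar>c j\<bar>))"
proof -
  have "\<forall>j\<in>B. \<exists>t. e j = ennreal t \<and> 0 \<le> t \<and> t < r"
  proof
    fix j assume "j \<in> B"
    then have "e j < ennreal r" by (rule assms(3))
    then show "\<exists>t. e j = ennreal t \<and> 0 \<le> t \<and> t < r"
      by (cases "e j" rule: ennreal_cases) (auto simp: ennreal_less_iff)
  qed
  then obtain t where t: "\<And>j. j \<in> B \<Longrightarrow> e j = ennreal (t j) \<and> 0 \<le> t j \<and> t j < r"
    by metis
  obtain j where "j \<in> B" "c j \<noteq> 0" using assms(2) by blast
  then have "\<bar>c j\<bar> * t j < \<bar>c j\<bar> * r"
    using t[of j] by (intro mult_strict_left_mono) auto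
  moreover have "\<bar>c i\<bar> * t i \<le> \<bar>c i\<bar> * r" if "i \<in> B" for i
    using t[OF that] by (simp add: mult_left_mono)
  ultimately have "(\<Sum>j\<in>B. \<bar>c j\<bar> * t j) < (\<Sum>j\<in>B. \<bar>c j\<bar> * r)"
    using \<open>j \<in> B\<close> by (intro sum_strict_mono_ex1 assms(1)) auto
  moreover have "(\<Sum>j\<in>B. ennreal \<bar>c j\<bar> * e j) = ennreal (\<Sum>j\<in>B. \<bar>c j\<bar> * t j)"
    using t by (simp add: ennreal_mult sum_ennreal flip: sum_ennreal ennreal_mult)
  ultimately show ?thesis
    using t \<open>j \<in> B\<close> by (auto simp: ennreal_less_iff sum_nonneg sum_distrib_left mult_ac)
qed

lemma card_L1_close_to_bumps_le_dim:
  fixes f :: "'b \<Rightarrow> 'a \<Rightarrow> real" and \<tau> :: "nat \<Rightarrow> 'a \<Rightarrow> real" and a :: "'b \<Rightarrow> nat \<Rightarrow> real"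
  assumes "finite B" "disjoint_family_on D B" "0 \<le> h" "0 \<le> \<delta>" "\<Omega> \<in> sets M"
    and "\<And>j. j \<in> B \<Longrightarrow> D j \<in> sets M \<and> D j \<subseteq> \<Omega> \<and> emeasure M (D j) = ennreal \<delta>"
    and "\<And>i j y. i \<in> B \<Longrightarrow> j \<in> B \<Longrightarrow> y \<in> D i \<Longrightarrow> \<bar>f j y\<bar> = (if i = j then h else 0)"
    and "\<And>j. j \<in> B \<Longrightarrow> f j \<in> borel_measurable M" "\<And>k. k < p \<Longrightarrow> \<tau> k \<in> borel_measurable M"
    and close: "\<And>j. j \<in> B \<Longrightarrow> L1_norm_on M \<Omega> (\<lambda>y. f j y - (\<Sum>k<p. a j k * \<tau> k y)) < ennreal (h * \<delta>)"
  shows "card B \<le> p"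
proof (rule ccontr)
  assume "\<not> card B \<le> p"
  then obtain c where c: "\<exists>j\<in>B. c j \<noteq> 0" "\<forall>k<p. (\<Sum>j\<in>B. c j * a j k) = 0"
    using exists_nontrivial_vanishing_combination[OF assms(1), of p a] by auto
  define g where "g j = (\<lambda>y. f j y - (\<Sum>k<p. a j k * \<tau> k y))" for j
  have g_meas: "g j \<in> borel_measurable M" if "j \<in> B" for j
    unfolding g_def using that assms(8,9) by measurable
  have "(\<Sum>j\<in>B. c j * g j y) = (\<Sum>j\<in>B. c j * f j y)" for y
  proof -
    have "(\<Sum>j\<in>B. c j * (\<Sum>k<p. a j k * \<tau> k y)) = (\<Sum>k<p. (\<Sum>j\<in>B. c j * a j k) * \<tau> k y)"
      by (simp add: sum_distrib_left sum_distrib_right mult_ac sum.swap[of _ B])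
    then show ?thesis using c(2) by (simp add: g_def right_diff_distrib sum_subtractf)
  qed
  then have "ennreal (h * \<delta> * (\<Sum>j\<in>B. \<bar>c j\<bar>)) \<le> L1_norm_on M \<Omega> (\<lambda>y. \<Sum>j\<in>B. c j * g j y)"
    using L1_norm_on_combination_of_bumps_ge[OF assms(1-4,6,7)] by simp
  also have "\<dots> \<le> (\<Sum>j\<in>B. ennreal \<bar>c j\<bar> * L1_norm_on M \<Omega> (g j))"
    using L1_norm_on_sum_le[OF assms(5) g_meas] .
  also have "\<dots> < ennreal (h * \<delta> * (\<Sum>j\<in>B. \<bar>c j\<bar>))"
    using close by (intro sum_abs_mult_less_ennreal assms(1) c(1)) (simp add: g_def)
  finally show False by simp
qed
lemma borel_measurable_box_fun[measurable]:
  assumes [measurable]: "fh \<in> borel_measurable M" "fw \<in> borel_measurable M"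
    "fc \<in> borel_measurable M" "fy \<in> borel_measurable M"
  shows "(\<lambda>z. box_fun (fh z) (fw z) (fc z) (fy z)) \<in> borel_measurable M"
  unfolding box_fun_def by measurable

lemma borel_measurable_deeponet:
  assumes "\<And>k. k < p \<Longrightarrow> \<tau> k \<in> borel_measurable M"
  shows "deeponet m p x \<beta> \<tau> u \<in> borel_measurable M"
  unfolding deeponet_def using assms by measurable

lemma deeponet_diff:
  "deeponet m p x \<beta> \<tau> u' y - deeponet m p x \<beta> \<tau> u y
     = (\<Sum>k<p. (\<beta> k (\<lambda>i\<in>{..<m}. u' (x i)) - \<beta> k (\<lambda>i\<in>{..<m}. u (x i))) * \<tau> k y)"
  unfolding deeponet_def by (simp add: left_diff_distrib sum_subtractf)

definition L1_increment_error :: "(nat \<Rightarrow> real \<Rightarrow> real) \<Rightarrow> (nat \<Rightarrow> real \<Rightarrow> real) \<Rightarrow> nat \<Rightarrow> ennreal" where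
  "L1_increment_error G N j =
     L1_norm_on lborel {0..<2 * pi} (\<lambda>y. (G (Suc j) y - N (Suc j) y) - (G j y - N j y))"

lemma L1_increment_error_le:
  assumes "\<And>j. G j \<in> borel_measurable lborel" "\<And>j. N j \<in> borel_measurable lborel"
  shows "L1_increment_error G N j \<le> L1_dist_T (G j) (N j) + L1_dist_T (G (Suc j)) (N (Suc j))"
  using L1_norm_on_diff_le[of "{0..<2 * pi}" lborel "\<lambda>y. G (Suc j) y - N (Suc j) y" "\<lambda>y. G j y - N j y"] assms
  by (simp add: L1_increment_error_def L1_dist_T_eq_L1_norm_on add.commute)

lemma card_small_increment_errors_le_trunks:
  assumes "0 < h" "0 < \<delta>" "real n * \<delta> \<le> w" "w + real n * \<delta> < 2 * pi"
    and "0 \<le> c - w / 2" "c - w / 2 + real n * \<delta> \<le> 2 * pi"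
    and "\<And>k. k < p \<Longrightarrow> \<tau> k \<in> borel_measurable lborel"
  shows "card {j. j < n \<and> L1_increment_error (\<lambda>j. box_fun h w (c + real j * \<delta>))
                              (\<lambda>j. deeponet m p x \<beta> \<tau> (u j)) j < ennreal (h * \<delta>)} \<le> p"
    (is "card ?B \<le> p")
proof (rule card_L1_close_to_bumps_le_dim)
  let ?D = "\<lambda>j. {c - w / 2 + real j * \<delta> ..< c - w / 2 + real (Suc j) * \<delta>}"
  let ?f = "\<lambda>j y. box_fun h w (c + real (Suc j) * \<delta>) y - box_fun h w (c + real j * \<delta>) y"
  let ?a = "\<lambda>j k. \<beta> k (\<lambda>i\<in>{..<m}. u (Suc j) (x i)) - \<beta> k (\<lambda>i\<in>{..<m}. u j (x i))"
  note slabs = box_fun_slabs[OF assms(2-6)]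
  show "disjoint_family_on ?D ?B"
    using slabs(1) by (rule disjoint_family_on_mono[rotated]) simp
  show "?D j \<in> sets lborel \<and> ?D j \<subseteq> {0..<2 * pi} \<and> emeasure lborel (?D j) = ennreal \<delta>" if "j \<in> ?B" for j
    using slabs(2) that by simp
  show "\<bar>?f j y\<bar> = (if i = j then h else 0)" if "i \<in> ?B" "j \<in> ?B" "y \<in> ?D i" for i j y
    using slabs(3)[of i j y] that assms(1) by simp
  show "L1_norm_on lborel {0..<2 * pi} (\<lambda>y. ?f j y - (\<Sum>k<p. ?a j k * \<tau> k y)) < ennreal (h * \<delta>)"
    if "j \<in> ?B" for j
    using that unfolding L1_increment_error_def deeponet_diff[symmetric] by (simp add: algebra_simps)
qed (use assms in auto)

lemma card_small_increment_errors_le_sensors: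
  assumes "0 < h" "0 < \<delta>" "real n * \<delta> < w" "real n * \<delta> < 2 * pi - w"
    and "0 \<le> c - w / 2" "c - w / 2 + real n * \<delta> \<le> 2 * pi"
  shows "card {j. j < n \<and> L1_increment_error (\<lambda>j. box_fun h w (c + real j * \<delta>))
                   (\<lambda>j. deeponet m p x \<beta> \<tau> (box_fun h w (t + real j * \<delta>))) j < ennreal (h * \<delta>)} \<le> m"
    (is "card ?B \<le> m")
proof -
  let ?r = "\<lambda>j. \<lambda>i\<in>{..<m}. box_fun h w (t + real j * \<delta>) (x i)"
  let ?D = "\<lambda>j. {c - w / 2 + real j * \<delta> ..< c - w / 2 + real (Suc j) * \<delta>}"
  have "real n * \<delta> \<le> w" "w + real n * \<delta> < 2 * pi" using assms(3,4) by linarith+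
  note slabs = box_fun_slabs[OF assms(2) this assms(5,6)]
  have "?r j \<noteq> ?r (Suc j)" if "j \<in> ?B" for j
  proof
    assume "?r j = ?r (Suc j)"
    \<comment> \<open>then the DeepONet output does not move, and the error increment is the whole target bump\<close>
    then have "L1_increment_error (\<lambda>j. box_fun h w (c + real j * \<delta>))
                   (\<lambda>j. deeponet m p x \<beta> \<tau> (box_fun h w (t + real j * \<delta>))) j
        = L1_norm_on lborel {0..<2 * pi}
            (\<lambda>y. \<Sum>i\<in>{j}. 1 * (box_fun h w (c + real (Suc i) * \<delta>) y - box_fun h w (c + real i * \<delta>) y))"
      by (simp add: L1_increment_error_def deeponet_def algebra_simps)
    moreover have "ennreal (h * \<delta> * (\<Sum>i\<in>{j}. \<bar>1\<bar>)) \<le> L1_norm_on lborel {0..<2 * pi}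
            (\<lambda>y. \<Sum>i\<in>{j}. 1 * (box_fun h w (c + real (Suc i) * \<delta>) y - box_fun h w (c + real i * \<delta>) y))"
    proof (rule L1_norm_on_combination_of_bumps_ge[where D = ?D])
      show "disjoint_family_on ?D {j}"
        using slabs(1) by (rule disjoint_family_on_mono[rotated]) simp
    qed (use slabs(2,3) that assms(1,2) in auto)
    ultimately show False using that by (simp add: not_le[symmetric])
  qed
  then have "card ?B \<le> card {j. j < n \<and> ?r j \<noteq> ?r (Suc j)}"
    by (intro card_mono) auto
  also have "\<dots> \<le> m"
    using assms(1-4) by (intro card_box_sensor_changes_le) auto
  finally show ?thesis .
qed

lemma sum_ge_of_few_small_steps:
  fixes E err :: "nat \<Rightarrow> ennreal"
  assumes "\<And>j. err j \<le> E j + E (Suc j)" "card {j. j < 2 * q \<and> err j < a} \<le> q"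
  shows "of_nat q * a \<le> 2 * (\<Sum>j\<le>2 * q. E j)"
proof -
  define B where "B = {j. j < 2 * q \<and> err j < a}"
  have "q \<le> card ({..<2 * q} - B)"
    using assms(2) by (simp add: B_def card_Diff_subset subset_eq)
  then have "of_nat q * a \<le> of_nat (card ({..<2 * q} - B)) * a"
    by (intro mult_right_mono) auto
  also have "\<dots> = (\<Sum>j\<in>{..<2 * q} - B. a)" by simp
  also have "\<dots> \<le> (\<Sum>j\<in>{..<2 * q} - B. err j)"
    by (intro sum_mono) (auto simp: B_def not_less)
  also have "\<dots> \<le> (\<Sum>j<2 * q. err j)" by (intro sum_mono2) auto
  also have "\<dots> \<le> (\<Sum>j<2 * q. E j) + (\<Sum>j<2 * q. E (Suc j))"
    using assms(1) by (simp add: sum_mono flip: sum.distrib)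
  also have "\<dots> \<le> (\<Sum>j\<le>2 * q. E j) + (\<Sum>j\<le>2 * q. E j)"
  proof (rule add_mono)
    have "(\<Sum>j<2 * q. E (Suc j)) = (\<Sum>j\<in>Suc ` {..<2 * q}. E j)"
      by (simp add: sum.reindex)
    also have "\<dots> \<le> (\<Sum>j\<le>2 * q. E j)" by (intro sum_mono2) auto
    finally show "(\<Sum>j<2 * q. E (Suc j)) \<le> (\<Sum>j\<le>2 * q. E j)" .
  qed (intro sum_mono2; auto)
  finally show ?thesis by (simp add: mult_2)
qed

lemma sum_L1_dist_translates_ge:
  fixes x :: "nat \<Rightarrow> real" and \<beta> :: "nat \<Rightarrow> (nat \<Rightarrow> real) \<Rightarrow> real" and \<tau> :: "nat \<Rightarrow> real \<Rightarrow> real"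
  assumes "0 < h" "0 < L" "L < w" "w + L < 2 * pi" "q = min m p" "0 < q"
    and "0 \<le> \<xi>\<^sub>0 + s - w / 2" "\<xi>\<^sub>0 + s - w / 2 + L \<le> 2 * pi"
    and \<tau>_meas: "\<And>k. k < p \<Longrightarrow> \<tau> k \<in> borel_measurable lborel"
  defines "\<delta> \<equiv> L / (2 * q)"
  shows "ennreal (h * L / 4) \<le> (\<Sum>j\<le>2 * q. L1_dist_T (box_fun h w (\<xi>\<^sub>0 + real j * \<delta> + s))
                                  (deeponet m p x \<beta> \<tau> (box_fun h w (\<xi>\<^sub>0 + real j * \<delta>))))"
proof -
  have "0 < \<delta>" "real (2 * q) * \<delta> = L" using assms(2,6) by (simp_all add: \<delta>_def)
  define G where "G = (\<lambda>j. box_fun h w (\<xi>\<^sub>0 + s + real j * \<delta>))"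
  define N where "N = (\<lambda>j. deeponet m p x \<beta> \<tau> (box_fun h w (\<xi>\<^sub>0 + real j * \<delta>)))"
  have "card {j. j < 2 * q \<and> L1_increment_error G N j < ennreal (h * \<delta>)} \<le> p"
    unfolding G_def N_def using assms(1-4,7,8) \<tau>_meas \<open>0 < \<delta>\<close> \<open>real (2 * q) * \<delta> = L\<close>
    by (intro card_small_increment_errors_le_trunks) auto
  moreover have "card {j. j < 2 * q \<and> L1_increment_error G N j < ennreal (h * \<delta>)} \<le> m"
    unfolding G_def N_def using assms(1-4,7,8) \<open>0 < \<delta>\<close> \<open>real (2 * q) * \<delta> = L\<close>
    by (intro card_small_increment_errors_le_sensors) auto
  ultimately have "card {j. j < 2 * q \<and> L1_increment_error G N j < ennreal (h * \<delta>)} \<le> q"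
    using assms(5) by simp
  moreover have "L1_increment_error G N j \<le> L1_dist_T (G j) (N j) + L1_dist_T (G (Suc j)) (N (Suc j))" for j
    by (rule L1_increment_error_le) (use \<tau>_meas in \<open>auto simp: G_def N_def intro: borel_measurable_deeponet\<close>)
  ultimately have "of_nat q * ennreal (h * \<delta>) \<le> 2 * (\<Sum>j\<le>2 * q. L1_dist_T (G j) (N j))"
    by (intro sum_ge_of_few_small_steps)
  moreover have "of_nat q * ennreal (h * \<delta>) = 2 * ennreal (h * L / 4)"
    using assms(1,2,6) by (simp add: \<delta>_def ennreal_of_nat_eq_real_of_nat flip: ennreal_mult ennreal_numeral)
  ultimately have "ennreal (h * L / 4) \<le> (\<Sum>j\<le>2 * q. L1_dist_T (G j) (N j))"
    by (simp add: ennreal_mult_le_mult_iff)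
  then show ?thesis by (simp add: G_def N_def ac_simps)
qed

lemma sum_indicator_slabs_le:
  fixes b \<delta> :: real
  assumes "0 \<le> \<delta>" "{b ..< b + real (Suc n) * \<delta>} \<subseteq> S"
  shows "(\<Sum>j\<le>n. indicator {b + real j * \<delta> ..< b + real (Suc j) * \<delta>} \<xi>) \<le> (indicator S \<xi> :: ennreal)"
proof -
  let ?I = "\<lambda>j. {b + real j * \<delta> ..< b + real (Suc j) * \<delta>}"
  have union: "(\<Sum>j\<le>n. indicator (?I j) \<xi>) = (indicator (\<Union>j\<le>n. ?I j) \<xi> :: ennreal)"
    using disjoint_family_slabs[OF assms(1), of b]
    by (intro indicator_UN_disjoint[symmetric]) (auto simp: disjoint_family_on_def)
  have "real (Suc j) * \<delta> \<le> real (Suc n) * \<delta>" "0 \<le> real j * \<delta>" if "j \<le> n" for j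
    using that assms(1) by (simp_all add: mult_right_mono)
  then have "(\<Union>j\<le>n. ?I j) \<subseteq> S" using assms(2) by force
  then show ?thesis
    unfolding union by (intro indicator_leI) blast
qed

lemma nn_integral_ge_of_translate_sums:
  fixes F :: "real \<Rightarrow> ennreal"
  assumes [measurable]: "F \<in> borel_measurable borel" "S \<in> sets borel"
    and "0 < \<delta>" "{b ..< b + real (Suc n) * \<delta>} \<subseteq> S"
    and "\<And>\<xi>. \<xi> \<in> {b ..< b + \<delta>} \<Longrightarrow> A \<le> (\<Sum>j\<le>n. F (\<xi> + real j * \<delta>))"
  shows "A * ennreal \<delta> \<le> (\<integral>\<^sup>+ \<xi>. F \<xi> * indicator S \<xi> \<partial>lborel)"
proof -
  define I where "I j = {b + real j * \<delta> ..< b + real (Suc j) * \<delta>}" for j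
  have shift: "(\<integral>\<^sup>+ \<xi>. F (\<xi> + real j * \<delta>) * indicator {b ..< b + \<delta>} \<xi> \<partial>lborel)
      = (\<integral>\<^sup>+ \<xi>. F \<xi> * indicator (I j) \<xi> \<partial>lborel)" for j
    using nn_integral_real_affine[of "\<lambda>\<xi>. F \<xi> * indicator (I j) \<xi>" 1 "real j * \<delta>"]
    by (simp add: I_def indicator_def algebra_simps cong: if_cong)
  have "(\<Sum>j\<le>n. indicator (I j) \<xi>) \<le> (indicator S \<xi> :: ennreal)" for \<xi>
    unfolding I_def using assms(3,4) by (intro sum_indicator_slabs_le) auto
  then have "(\<integral>\<^sup>+ \<xi>. F \<xi> * (\<Sum>j\<le>n. indicator (I j) \<xi>) \<partial>lborel) \<le> (\<integral>\<^sup>+ \<xi>. F \<xi> * indicator S \<xi> \<partial>lborel)"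
    by (intro nn_integral_mono mult_left_mono) auto
  moreover have "A * ennreal \<delta> \<le> (\<integral>\<^sup>+ \<xi>. F \<xi> * (\<Sum>j\<le>n. indicator (I j) \<xi>) \<partial>lborel)"
  proof -
    have "A * ennreal \<delta> = (\<integral>\<^sup>+ \<xi>. A * indicator {b ..< b + \<delta>} \<xi> \<partial>lborel)"
      using assms(3) by (simp add: nn_integral_cmult_indicator)
    also have "\<dots> \<le> (\<integral>\<^sup>+ \<xi>. (\<Sum>j\<le>n. F (\<xi> + real j * \<delta>) * indicator {b ..< b + \<delta>} \<xi>) \<partial>lborel)"
      using assms(5) by (intro nn_integral_mono) (auto simp: indicator_def)
    also have "\<dots> = (\<Sum>j\<le>n. \<integral>\<^sup>+ \<xi>. F (\<xi> + real j * \<delta>) * indicator {b ..< b + \<delta>} \<xi> \<partial>lborel)"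
      by (rule nn_integral_sum) measurable
    also have "\<dots> = (\<Sum>j\<le>n. \<integral>\<^sup>+ \<xi>. F \<xi> * indicator (I j) \<xi> \<partial>lborel)"
      by (simp only: shift)
    also have "\<dots> = (\<integral>\<^sup>+ \<xi>. F \<xi> * (\<Sum>j\<le>n. indicator (I j) \<xi>) \<partial>lborel)"
      unfolding sum_distrib_left by (rule nn_integral_sum[symmetric]) (measurable, simp add: I_def)
    finally show ?thesis .
  qed
  ultimately show ?thesis by (rule order_trans[rotated])
qed

lemma exists_window_pair:
  fixes r l :: real
  assumes "0 \<le> l" "2 * l \<le> 2 * pi"
  obtains b k where "0 \<le> b" "b + l \<le> 2 * pi"
    "0 \<le> b + r + 2 * pi * real_of_int k" "b + r + 2 * pi * real_of_int k + l \<le> 2 * pi"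
proof -
  define k where "k = - \<lfloor>r / (2 * pi)\<rfloor>"
  define u where "u = r + 2 * pi * real_of_int k"
  have "real_of_int \<lfloor>r / (2 * pi)\<rfloor> * (2 * pi) \<le> r" "r < (real_of_int \<lfloor>r / (2 * pi)\<rfloor> + 1) * (2 * pi)"
    using floor_divide_lower[of "2 * pi" r] floor_divide_upper[of "2 * pi" r] by simp_all
  then have u: "0 \<le> u" "u < 2 * pi" unfolding u_def k_def by (simp_all add: algebra_simps)
  show thesis
  proof (cases "u + l \<le> 2 * pi")
    case True
    then show thesis using that[of 0 k] u assms by (simp add: u_def)
  next
    case False
    then show thesis using that[of "2 * pi - u" "k - 1"] u assms by (simp add: u_def algebra_simps)
  qed
qed

lemma borel_measurable_L1_dist_deeponet:
  assumes "\<And>k. k < p \<Longrightarrow> \<beta> k \<in> borel_measurable (PiM {..<m} (\<lambda>_. lborel))"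
    and "\<And>k. k < p \<Longrightarrow> \<tau> k \<in> borel_measurable lborel"
  shows "(\<lambda>(h, w, \<xi>). L1_dist_T (G_adv a T (box_fun h w \<xi>)) (deeponet m p x \<beta> \<tau> (box_fun h w \<xi>)))
     \<in> borel_measurable (borel \<Otimes>\<^sub>M (borel \<Otimes>\<^sub>M borel))"
proof -
  have [measurable]: "\<tau> k \<in> borel_measurable borel" if "k < p" for k
    using assms(2)[OF that] by simp
  have "(\<lambda>z::real \<times> real \<times> real. \<lambda>i\<in>{..<m}. box_fun (fst z) (fst (snd z)) (snd (snd z)) (x i))
     \<in> measurable (borel \<Otimes>\<^sub>M (borel \<Otimes>\<^sub>M borel)) (PiM {..<m} (\<lambda>_. lborel))"
    by (rule measurable_restrict) (simp add: measurable_lborel2)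
  from measurable_comp[OF this assms(1)]
  have [measurable]: "(\<lambda>z. \<beta> k (\<lambda>i\<in>{..<m}. box_fun (fst z) (fst (snd z)) (snd (snd z)) (x i)))
     \<in> borel_measurable (borel \<Otimes>\<^sub>M (borel \<Otimes>\<^sub>M borel))" if "k < p" for k
    using that by (simp add: o_def)
  have "(\<lambda>(z, y). ennreal (indicator {0..<2 * pi} y *
      \<bar>G_adv a T (box_fun (fst z) (fst (snd z)) (snd (snd z))) y
        - deeponet m p x \<beta> \<tau> (box_fun (fst z) (fst (snd z)) (snd (snd z))) y\<bar>))
     \<in> borel_measurable ((borel \<Otimes>\<^sub>M (borel \<Otimes>\<^sub>M borel)) \<Otimes>\<^sub>M lborel)"
    unfolding G_adv_def deeponet_def by measurable
  from lborel.borel_measurable_nn_integral[OF this] show ?thesis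
    unfolding L1_dist_T_def by (simp add: case_prod_beta')
qed

lemma nn_integral_unif_shift_L1_dist_ge:
  fixes x :: "nat \<Rightarrow> real" and \<beta> :: "nat \<Rightarrow> (nat \<Rightarrow> real) \<Rightarrow> real" and \<tau> :: "nat \<Rightarrow> real \<Rightarrow> real"
  assumes "0 < h" "0 < L" "L < w" "w + L < 2 * pi" "3 * L \<le> 2 * pi" "q = min m p" "0 < q"
    and \<beta>_meas: "\<And>k. k < p \<Longrightarrow> \<beta> k \<in> borel_measurable (PiM {..<m} (\<lambda>_. lborel))"
    and \<tau>_meas: "\<And>k. k < p \<Longrightarrow> \<tau> k \<in> borel_measurable lborel"
  shows "ennreal (h * L\<^sup>2 / (16 * pi * q)) \<le> (\<integral>\<^sup>+ \<xi>. L1_dist_T (G_adv a T (box_fun h w \<xi>))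
            (deeponet m p x \<beta> \<tau> (box_fun h w \<xi>)) \<partial>unif_real 0 (2 * pi))"
proof -
  define \<delta> where "\<delta> = L / (2 * q)"
  have "0 < \<delta>" "real (Suc (2 * q)) * \<delta> = L + \<delta>"
    using assms(2,7) by (simp_all add: \<delta>_def field_simps)
  have "\<delta> \<le> L / 2"
    unfolding \<delta>_def using assms(2,7) by (intro divide_left_mono) auto
  then have "2 * (L + \<delta>) \<le> 2 * pi" using assms(5) by (simp add: field_simps)
  define F where "F = (\<lambda>\<xi>. L1_dist_T (G_adv a T (box_fun h w \<xi>)) (deeponet m p x \<beta> \<tau> (box_fun h w \<xi>)))"
  have "(\<lambda>\<xi>. (h, w, \<xi>)) \<in> measurable borel (borel \<Otimes>\<^sub>M (borel \<Otimes>\<^sub>M borel))" by measurable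
  from measurable_comp[OF this borel_measurable_L1_dist_deeponet[of p \<beta> m \<tau> a T x, OF \<beta>_meas \<tau>_meas]]
  have [measurable]: "F \<in> borel_measurable borel" by (simp add: F_def o_def)
  \<comment> \<open>both the input centres and the target left edges of the sweep stay inside [0, 2\<pi>]\<close>
  obtain b k where b: "0 \<le> b" "b + (L + \<delta>) \<le> 2 * pi"
    and k: "0 \<le> b + (a * T - w / 2) + 2 * pi * real_of_int k"
      "b + (a * T - w / 2) + 2 * pi * real_of_int k + (L + \<delta>) \<le> 2 * pi"
    using exists_window_pair[of "L + \<delta>" "a * T - w / 2"] \<open>0 < \<delta>\<close> assms(2) \<open>2 * (L + \<delta>) \<le> 2 * pi\<close>
    by auto
  define s where "s = a * T + 2 * pi * real_of_int k"
  have F_eq: "F \<xi> = L1_dist_T (box_fun h w (\<xi> + s)) (deeponet m p x \<beta> \<tau> (box_fun h w \<xi>))" for \<xi>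
    using box_fun_add_period[of h w "\<xi> + a * T" k] by (simp add: F_def G_adv_box_fun s_def add.assoc)
  have "ennreal (h * L / 4) \<le> (\<Sum>j\<le>2 * q. F (\<xi> + real j * \<delta>))" if "\<xi> \<in> {b ..< b + \<delta>}" for \<xi>
    unfolding F_eq \<delta>_def
    by (rule sum_L1_dist_translates_ge[OF assms(1-4,6,7)]) (use that k \<tau>_meas in \<open>auto simp: s_def \<delta>_def\<close>)
  then have "ennreal (h * L / 4) * ennreal \<delta> \<le> (\<integral>\<^sup>+ \<xi>. F \<xi> * indicator {0..2 * pi} \<xi> \<partial>lborel)"
    using b \<open>0 < \<delta>\<close> \<open>real (Suc (2 * q)) * \<delta> = L + \<delta>\<close>
    by (intro nn_integral_ge_of_translate_sums) auto
  then have "ennreal (h * L / 4) * ennreal \<delta> / ennreal (2 * pi) \<le> (\<integral>\<^sup>+ \<xi>. F \<xi> \<partial>unif_real 0 (2 * pi))"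
    by (simp add: unif_real_def nn_integral_uniform_measure divide_right_mono_ennreal)
  moreover have "ennreal (h * L / 4) * ennreal \<delta> / ennreal (2 * pi) = ennreal (h * L\<^sup>2 / (16 * pi * q))"
    using assms(1,2,7) by (simp add: \<delta>_def divide_ennreal power2_eq_square field_simps flip: ennreal_mult)
  ultimately show ?thesis by (simp add: F_def)
qed

lemma sets_unif_real [measurable_cong]: "sets (unif_real lo hi) = sets borel"
  by (simp add: unif_real_def)

lemma prob_space_unif_real: "lo \<le> hi \<Longrightarrow> prob_space (unif_real lo hi)"
  by (auto simp: unif_real_def intro!: prob_space_uniform_measure prob_space_return)

lemma AE_unif_real:
  assumes "lo \<le> hi"
  shows "AE x in unif_real lo hi. x \<in> {lo..hi}"
proof (cases "lo < hi")
  case True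
  have "AE x in uniform_measure lborel {lo..hi}. x \<in> {lo..hi}"
    by (rule AE_uniform_measureI) auto
  then show ?thesis using True unfolding unif_real_def by simp
next
  case False
  have "Measurable.pred lborel (\<lambda>x. x \<in> {lo..hi})" by measurable
  then have "AE x in return lborel lo. x \<in> {lo..hi}"
    using assms by (simp add: AE_return)
  then show ?thesis using False unfolding unif_real_def by simp
qed

lemma nn_integral_pair_ge:
  assumes "prob_space M" "sigma_finite_measure N" "F \<in> borel_measurable (M \<Otimes>\<^sub>M N)"
    and "AE x in M. K \<le> (\<integral>\<^sup>+ y. F (x, y) \<partial>N)"
  shows "K \<le> (\<integral>\<^sup>+ z. F z \<partial>(M \<Otimes>\<^sub>M N))"
proof -
  have "K = (\<integral>\<^sup>+ x. K \<partial>M)" using prob_space.emeasure_space_1[OF assms(1)] by simp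
  also have "\<dots> \<le> (\<integral>\<^sup>+ x. \<integral>\<^sup>+ y. F (x, y) \<partial>N \<partial>M)"
    using assms(4) by (rule nn_integral_mono_AE)
  also have "\<dots> = (\<integral>\<^sup>+ z. F z \<partial>(M \<Otimes>\<^sub>M N))"
    using sigma_finite_measure.nn_integral_fst[OF assms(2,3)] .
  finally show ?thesis .
qed

lemma nn_integral_param_law_ge:
  assumes "hl \<le> hu" "wl \<le> wu" "F \<in> borel_measurable (borel \<Otimes>\<^sub>M (borel \<Otimes>\<^sub>M borel))"
    and "\<And>h w. h \<in> {hl..hu} \<Longrightarrow> w \<in> {wl..wu} \<Longrightarrow> K \<le> (\<integral>\<^sup>+ \<xi>. F (h, w, \<xi>) \<partial>unif_real 0 (2 * pi))"
  shows "K \<le> (\<integral>\<^sup>+ z. F z \<partial>param_law hl hu wl wu)"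
  unfolding param_law_def
proof (rule nn_integral_pair_ge)
  have sets: "sets (unif_real hl hu \<Otimes>\<^sub>M (unif_real wl wu \<Otimes>\<^sub>M unif_real 0 (2 * pi)))
      = sets (borel \<Otimes>\<^sub>M (borel \<Otimes>\<^sub>M borel))"
    by (intro sets_pair_measure_cong sets_unif_real)
  show "F \<in> borel_measurable (unif_real hl hu \<Otimes>\<^sub>M (unif_real wl wu \<Otimes>\<^sub>M unif_real 0 (2 * pi)))"
    using assms(3) by (simp add: measurable_cong_sets[OF sets refl])
  show "prob_space (unif_real hl hu)" using assms(1) by (rule prob_space_unif_real)
  show "sigma_finite_measure (unif_real wl wu \<Otimes>\<^sub>M unif_real 0 (2 * pi))"
    using assms(2) by (intro prob_space_imp_sigma_finite prob_space_pair prob_space_unif_real) simp_all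
  show "AE h in unif_real hl hu. K \<le> (\<integral>\<^sup>+ y. F (h, y) \<partial>(unif_real wl wu \<Otimes>\<^sub>M unif_real 0 (2 * pi)))"
    using AE_unif_real[OF assms(1)]
  proof (rule eventually_mono)
    fix h assume "h \<in> {hl..hu}"
    show "K \<le> (\<integral>\<^sup>+ y. F (h, y) \<partial>(unif_real wl wu \<Otimes>\<^sub>M unif_real 0 (2 * pi)))"
    proof (rule nn_integral_pair_ge)
      show "prob_space (unif_real wl wu)" using assms(2) by (rule prob_space_unif_real)
      show "sigma_finite_measure (unif_real 0 (2 * pi))"
        by (intro prob_space_imp_sigma_finite prob_space_unif_real) simp
      show "(\<lambda>y. F (h, y)) \<in> borel_measurable (unif_real wl wu \<Otimes>\<^sub>M unif_real 0 (2 * pi))"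
        using assms(3) sets by simp
      show "AE w in unif_real wl wu. K \<le> (\<integral>\<^sup>+ \<xi>. F (h, w, \<xi>) \<partial>unif_real 0 (2 * pi))"
        using AE_unif_real[OF assms(2)] by (rule eventually_mono) (rule assms(4)[OF \<open>h \<in> {hl..hu}\<close>])
    qed
  qed
qed

lemma nn_integral_param_law_L1_dist_ge:
  fixes x :: "nat \<Rightarrow> real" and \<beta> :: "nat \<Rightarrow> (nat \<Rightarrow> real) \<Rightarrow> real" and \<tau> :: "nat \<Rightarrow> real \<Rightarrow> real"
  assumes "0 < hl" "hl \<le> hu" "wl \<le> wu" "0 < L" "L < wl" "wu + L < 2 * pi" "3 * L \<le> 2 * pi"
    and "0 < min m p"
    and \<beta>_meas: "\<And>k. k < p \<Longrightarrow> \<beta> k \<in> borel_measurable (PiM {..<m} (\<lambda>_. lborel))"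
    and \<tau>_meas: "\<And>k. k < p \<Longrightarrow> \<tau> k \<in> borel_measurable lborel"
  shows "ennreal (hl * L\<^sup>2 / (16 * pi * real (min m p))) \<le> (\<integral>\<^sup>+ (h, w, \<xi>).
      L1_dist_T (G_adv a T (box_fun h w \<xi>)) (deeponet m p x \<beta> \<tau> (box_fun h w \<xi>)) \<partial>param_law hl hu wl wu)"
proof (rule nn_integral_param_law_ge)
  fix h w assume hw: "h \<in> {hl..hu}" "w \<in> {wl..wu}"
  have "ennreal (hl * L\<^sup>2 / (16 * pi * real (min m p))) \<le> ennreal (h * L\<^sup>2 / (16 * pi * real (min m p)))"
    using hw by (intro ennreal_leI divide_right_mono mult_right_mono) auto
  also have "\<dots> \<le> (\<integral>\<^sup>+ \<xi>. L1_dist_T (G_adv a T (box_fun h w \<xi>))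
                   (deeponet m p x \<beta> \<tau> (box_fun h w \<xi>)) \<partial>unif_real 0 (2 * pi))"
    using hw assms by (intro nn_integral_unif_shift_L1_dist_ge) auto
  finally show "ennreal (hl * L\<^sup>2 / (16 * pi * real (min m p))) \<le> (\<integral>\<^sup>+ \<xi>. (\<lambda>(h, w, \<xi>).
      L1_dist_T (G_adv a T (box_fun h w \<xi>)) (deeponet m p x \<beta> \<tau> (box_fun h w \<xi>))) (h, w, \<xi>)
      \<partial>unif_real 0 (2 * pi))" by simp
qed (use assms in \<open>auto intro: borel_measurable_L1_dist_deeponet\<close>)

theorem theorem3p1:
  fixes hl hu wl wu M :: real
  assumes "0 < hl" "hl \<le> hu" "0 < wl" "wl \<le> wu" "wu < 2 * pi" "0 < M"
  shows "\<exists>C>0. \<forall>(a::real) (T::real) (m::nat) (p::nat) (x::nat \<Rightarrow> real)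
            (\<beta>::nat \<Rightarrow> (nat \<Rightarrow> real) \<Rightarrow> real) (\<tau>::nat \<Rightarrow> real \<Rightarrow> real).
      0 < T \<longrightarrow>
      (\<forall>i<m. x i \<in> {0..<2 * pi}) \<longrightarrow>
      (\<forall>k<p. \<beta> k \<in> borel_measurable (PiM {..<m} (\<lambda>_. lborel))) \<longrightarrow>
      (\<forall>k<p. \<tau> k \<in> borel_measurable lborel \<and>
              integrable lborel (\<lambda>y. indicator {0..<2 * pi} y * (\<tau> k y)\<^sup>2)) \<longrightarrow>
      (\<forall>h\<in>{hl..hu}. \<forall>w\<in>{wl..wu}. \<forall>\<xi>\<in>{0..2 * pi}.
         AE y in lborel. y \<in> {0..<2 * pi} \<longrightarrow>
           \<bar>deeponet m p x \<beta> \<tau> (box_fun h w \<xi>) y\<bar> \<le> M) \<longrightarrow>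
      (\<integral>\<^sup>+ (h, w, \<xi>). L1_dist_T (G_adv a T (box_fun h w \<xi>))
                                 (deeponet m p x \<beta> \<tau> (box_fun h w \<xi>))
         \<partial>param_law hl hu wl wu)
        \<ge> ennreal (C / real (min m p))"
proof -
  define L where "L = min wl (2 * pi - wu) / 2"
  have L: "0 < L" "L < wl" "wu + L < 2 * pi" "3 * L \<le> 2 * pi"
    using assms(3-5) by (auto simp: L_def min_def field_simps)
  define C where "C = hl * L\<^sup>2 / (16 * pi)"
  show ?thesis
  proof (intro exI[of _ C] conjI allI impI)
    show "0 < C" using assms(1) L(1) by (simp add: C_def)
    fix a T :: real and m p :: nat and x :: "nat \<Rightarrow> real"
      and \<beta> :: "nat \<Rightarrow> (nat \<Rightarrow> real) \<Rightarrow> real" and \<tau> :: "nat \<Rightarrow> real \<Rightarrow> real"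
    assume "\<forall>k<p. \<beta> k \<in> borel_measurable (PiM {..<m} (\<lambda>_. lborel))"
      and "\<forall>k<p. \<tau> k \<in> borel_measurable lborel \<and>
              integrable lborel (\<lambda>y. indicator {0..<2 * pi} y * (\<tau> k y)\<^sup>2)"
    then show "(\<integral>\<^sup>+ (h, w, \<xi>). L1_dist_T (G_adv a T (box_fun h w \<xi>))
                                 (deeponet m p x \<beta> \<tau> (box_fun h w \<xi>)) \<partial>param_law hl hu wl wu)
        \<ge> ennreal (C / real (min m p))"
      using nn_integral_param_law_L1_dist_ge[OF assms(1,2,4) L, of m p \<beta> \<tau> a T x]
      by (cases "min m p = 0") (auto simp: C_def)
  qed
qed

end
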